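(* Let $D,\ell,\beta>0$. For $a>0$ put $\omega_N=\frac{\sqrt{a\beta}}2$, $\xi=\frac{D\ell}{4}\sqrt{\beta/a}$. (i) If $D^2\ell\beta<8$ and $a=\frac{4}{D^2\beta}$, and $c=\frac{e^{D\omega_N\xi}}{\cos(D\omega_N\sqrt{1-\xi^2})-\frac{\xi}{\sqrt{1-\xi^2}}\sin(D\omega_N\sqrt{1-\xi^2})}$, then $$a\ge\frac{\ell}{2}\quad\text{and}\quad c\le\frac{2e}{(1-\frac{D^2\ell\beta}{8})^2}.$$ (ii) If $a=\frac{D^2\ell^2\beta}{16}(1-\tanh^2(\frac{D^2\ell\beta}{8}))$ and $c=\frac{e^{D\omega_N\xi}}{\cosh(D\omega_N\sqrt{\xi^2-1})-\frac{\xi}{\sqrt{\xi^2-1}}\sinh(D\omega_N\sqrt{\xi^2-1})}$, then $$a\ge\frac{D^2\ell^2\beta}{16}\exp\Big(-\frac{D^2\ell\beta}{4}\Big)\quad\text{and}\quad c\le\frac{4}{D^2\ell\beta}\exp\Big(\frac{D^2\ell\beta}{2}\Big).$$ *)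

theory Defs
  imports Complex_Main
begin

definition omegaN :: "real \<Rightarrow> real \<Rightarrow> real" where
  "omegaN \<beta> a = sqrt (a * \<beta>) / 2"

definition xi :: "real \<Rightarrow> real \<Rightarrow> real \<Rightarrow> real \<Rightarrow> real" where
  "xi D l \<beta> a = D * l / 4 * sqrt (\<beta> / a)"

end

theory Submission
  imports Defs
begin

text \<open>Both choices of \<open>a\<close> have the form \<open>a = D\<^sup>2 l\<^sup>2 \<beta> / (16 \<xi>\<^sup>2)\<close>, which makes \<open>\<xi>\<close> the
  damping ratio and \<open>D \<omega>\<^sub>N \<xi> = k = D\<^sup>2 l \<beta> / 8\<close>. In the underdamped case \<open>\<xi> = k\<close>, and
  \<open>cos s \<ge> 1 - s\<^sup>2 / 2\<close>, \<open>sin s \<le> s\<close> bound the denominator of \<open>c\<close> below by \<open>(1 - k)\<^sup>2 / 2\<close>.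
  In the overdamped case \<open>\<xi> = cosh k\<close> and the frequency argument is \<open>u = k tanh k\<close>; the
  denominator collapses to \<open>sinh (k - u) / sinh k\<close> with \<open>k - u = k exp (-k) / cosh k\<close>, and
  \<open>sinh v \<ge> v\<close>, \<open>sinh k cosh k \<le> exp (2 k) / 4\<close> give \<open>c \<le> exp (4 k) / (4 k)\<close>.\<close>

lemma cos_ge_one_minus_square_half: "1 - x\<^sup>2 / 2 \<le> cos (x::real)"
proof -
  have "(sin (x / 2))\<^sup>2 \<le> (x / 2)\<^sup>2"
    using power_mono[OF abs_sin_x_le_abs_x[of "x / 2"], of 2] by (simp add: power_divide)
  moreover have "cos x = 1 - 2 * (sin (x / 2))\<^sup>2"
    using cos_double_sin[of "x / 2"] by simp
  ultimately show ?thesis by (simp add: power_divide)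
qed

lemma sinh_ge_self: "0 \<le> x \<Longrightarrow> x \<le> sinh (x::real)"
  using real_le_x_sinh by (simp add: sinh_field_def exp_minus)

lemma xi_omegaN_of_damping_ratio:
  fixes D l \<beta> x :: real
  assumes "D > 0" "l > 0" "\<beta> > 0" "x > 0"
    and a: "a = D\<^sup>2 * l\<^sup>2 * \<beta> / (16 * x\<^sup>2)"
  shows "xi D l \<beta> a = x" and "D * omegaN \<beta> a = D\<^sup>2 * l * \<beta> / 8 / x"
proof -
  have "\<beta> / a = (4 * x / (D * l))\<^sup>2" and "a * \<beta> = (D * l * \<beta> / (4 * x))\<^sup>2"
    using assms by (simp_all add: a field_simps power2_eq_square)
  then have "sqrt (\<beta> / a) = 4 * x / (D * l)" and "sqrt (a * \<beta>) = D * l * \<beta> / (4 * x)"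
    using assms by simp_all
  then show "xi D l \<beta> a = x" and "D * omegaN \<beta> a = D\<^sup>2 * l * \<beta> / 8 / x"
    using assms(1-4) by (simp_all add: xi_def omegaN_def field_simps power2_eq_square)
qed

lemma underdamped_denominator_ge:
  fixes x :: real
  assumes "0 < x" "x < 1"
  shows "(1 - x)\<^sup>2 / 2 \<le> cos (sqrt (1 - x\<^sup>2)) - x / sqrt (1 - x\<^sup>2) * sin (sqrt (1 - x\<^sup>2))"
proof -
  define s where "s = sqrt (1 - x\<^sup>2)"
  have "x\<^sup>2 < 1"
    using assms by (simp add: abs_square_less_1)
  then have s_pos: "0 < s" and s_square: "s\<^sup>2 = 1 - x\<^sup>2"
    by (simp_all add: s_def)
  have "x / s * sin s \<le> x"
    using sin_x_le_x[of s] s_pos assms by (simp add: field_simps)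
  then have "1 - s\<^sup>2 / 2 - x \<le> cos s - x / s * sin s"
    using cos_ge_one_minus_square_half[of s] by linarith
  moreover have "1 - s\<^sup>2 / 2 - x = (1 - x)\<^sup>2 / 2"
    unfolding s_square by (simp add: power2_eq_square field_simps)
  ultimately show ?thesis
    unfolding s_def[symmetric] by linarith
qed

lemma underdamped_response_le:
  fixes x :: real
  assumes "0 < x" "x < 1"
  shows "exp x / (cos (sqrt (1 - x\<^sup>2)) - x / sqrt (1 - x\<^sup>2) * sin (sqrt (1 - x\<^sup>2)))
           \<le> 2 * exp 1 / (1 - x)\<^sup>2"
proof -
  define d where "d = cos (sqrt (1 - x\<^sup>2)) - x / sqrt (1 - x\<^sup>2) * sin (sqrt (1 - x\<^sup>2))"
  have half_square_pos: "0 < (1 - x)\<^sup>2 / 2"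
    using assms by simp
  moreover have d_ge: "(1 - x)\<^sup>2 / 2 \<le> d"
    using underdamped_denominator_ge[OF assms] by (simp add: d_def)
  ultimately have "0 < d"
    by linarith
  with half_square_pos d_ge have "exp x / d \<le> exp x / ((1 - x)\<^sup>2 / 2)"
    by (intro divide_left_mono) auto
  also have "\<dots> \<le> exp 1 / ((1 - x)\<^sup>2 / 2)"
    using assms half_square_pos by (intro divide_right_mono) auto
  finally show ?thesis
    by (simp add: d_def mult.commute)
qed

lemma one_minus_tanh_square: "1 - (tanh t)\<^sup>2 = 1 / (cosh t)\<^sup>2" for t :: real
proof -
  have "1 - (tanh t)\<^sup>2 = ((cosh t)\<^sup>2 - (sinh t)\<^sup>2) / (cosh t)\<^sup>2"
    by (simp add: tanh_def power_divide field_simps)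
  then show ?thesis
    by (simp add: hyperbolic_pythagoras)
qed

lemma exp_minus_double_le_one_minus_tanh_square:
  fixes t :: real
  assumes "0 \<le> t"
  shows "exp (- (2 * t)) \<le> 1 - (tanh t)\<^sup>2"
proof -
  have "cosh t \<le> exp t"
    using cosh_plus_sinh[of t] sinh_real_nonneg_iff[of t] assms by linarith
  then have "1 / (exp t)\<^sup>2 \<le> 1 / (cosh t)\<^sup>2"
    by (simp add: frac_le power_mono)
  then show ?thesis
    unfolding one_minus_tanh_square
    by (simp add: exp_minus power2_eq_square inverse_eq_divide flip: exp_add)
qed

lemma cosh_minus_coth_mult_sinh:
  fixes t u :: real
  assumes "sinh t \<noteq> 0"
  shows "cosh u - cosh t / sinh t * sinh u = sinh (t - u) / sinh t"
  using assms by (simp add: sinh_diff field_simps)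

lemma self_minus_mult_tanh: "t - t * tanh t = t * exp (- t) / cosh t" for t :: real
  by (simp add: tanh_def field_simps flip: cosh_minus_sinh)

lemma sinh_mult_cosh_le: "sinh t * cosh t \<le> exp (2 * t) / 4" for t :: real
proof -
  have "4 * (sinh t * cosh t) = (cosh t + sinh t)\<^sup>2 - (cosh t - sinh t)\<^sup>2"
    by (simp add: power2_eq_square algebra_simps)
  also have "\<dots> \<le> (exp t)\<^sup>2"
    by (simp add: cosh_plus_sinh)
  finally show ?thesis
    by (simp add: power2_eq_square flip: exp_add)
qed

lemma overdamped_response_le:
  fixes t :: real
  assumes "0 < t"
  shows "exp t / (cosh (t * tanh t) - cosh t / sinh t * sinh (t * tanh t))
           \<le> exp (4 * t) / (4 * t)"
proof -
  define v where "v = t - t * tanh t"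
  have v: "v = t * exp (- t) / cosh t"
    by (simp add: v_def self_minus_mult_tanh)
  have v_pos: "0 < v"
    using assms by (simp add: v)
  have "exp t / (cosh (t * tanh t) - cosh t / sinh t * sinh (t * tanh t))
          = exp t * sinh t / sinh v"
    using assms by (subst cosh_minus_coth_mult_sinh) (simp_all add: v_def)
  also have "\<dots> \<le> exp t * sinh t / v"
    using sinh_ge_self[of v] v_pos assms by (intro divide_left_mono) auto
  also have "\<dots> = exp (2 * t) * (sinh t * cosh t) / t"
    using assms by (simp add: v exp_minus field_simps flip: exp_add)
  also have "\<dots> \<le> exp (2 * t) * (exp (2 * t) / 4) / t"
    using sinh_mult_cosh_le[of t] assms by (intro divide_right_mono mult_left_mono) auto
  also have "\<dots> = exp (4 * t) / (4 * t)"
    by (simp flip: exp_add)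
  finally show ?thesis .
qed

lemma underdamped_choice_bounds:
  fixes D l \<beta> :: real
  assumes "D > 0" and "l > 0" and "\<beta> > 0" and "D^2 * l * \<beta> < 8"
  shows
    "let a = 4 / (D^2 * \<beta>); w = omegaN \<beta> a; x = xi D l \<beta> a;
         c = exp (D * w * x) /
             (cos (D * w * sqrt (1 - x^2)) - x / sqrt (1 - x^2) * sin (D * w * sqrt (1 - x^2)))
     in a \<ge> l / 2 \<and> c \<le> 2 * exp 1 / (1 - D^2 * l * \<beta> / 8)^2"
proof -
  define k where "k = D\<^sup>2 * l * \<beta> / 8"
  have k_pos: "0 < k"
    using assms by (simp add: k_def)
  have "4 / (D\<^sup>2 * \<beta>) = D\<^sup>2 * l\<^sup>2 * \<beta> / (16 * k\<^sup>2)"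
    using assms by (simp add: k_def field_simps power2_eq_square)
  note damping = xi_omegaN_of_damping_ratio[OF assms(1-3) k_pos this, folded k_def]
  have "l / 2 \<le> 4 / (D\<^sup>2 * \<beta>)"
    using assms by (simp add: field_simps)
  moreover have "k < 1"
    using assms by (simp add: k_def)
  ultimately show ?thesis
    using underdamped_response_le[OF k_pos] k_pos
    unfolding Let_def k_def[symmetric] damping by simp
qed

lemma overdamped_choice_bounds:
  fixes D l \<beta> :: real
  assumes "D > 0" and "l > 0" and "\<beta> > 0"
  shows
    "let a = D^2 * l^2 * \<beta> / 16 * (1 - (tanh (D^2 * l * \<beta> / 8))^2);
         w = omegaN \<beta> a; x = xi D l \<beta> a;
         c = exp (D * w * x) /
             (cosh (D * w * sqrt (x^2 - 1)) - x / sqrt (x^2 - 1) * sinh (D * w * sqrt (x^2 - 1)))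
     in a \<ge> D^2 * l^2 * \<beta> / 16 * exp (- (D^2 * l * \<beta> / 4)) \<and>
        c \<le> 4 / (D^2 * l * \<beta>) * exp (D^2 * l * \<beta> / 2)"
proof -
  define k where "k = D\<^sup>2 * l * \<beta> / 8"
  have k_pos: "0 < k"
    using assms by (simp add: k_def)
  have "D\<^sup>2 * l\<^sup>2 * \<beta> / 16 * (1 - (tanh k)\<^sup>2) = D\<^sup>2 * l\<^sup>2 * \<beta> / (16 * (cosh k)\<^sup>2)"
    by (simp add: one_minus_tanh_square)
  note damping = xi_omegaN_of_damping_ratio[OF assms cosh_real_pos this, folded k_def]
  have k_multiples: "D\<^sup>2 * l * \<beta> / 4 = 2 * k" "D\<^sup>2 * l * \<beta> / 2 = 4 * k"
    "4 / (D\<^sup>2 * l * \<beta>) = 1 / (2 * k)"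
    by (simp_all add: k_def)
  have "sqrt ((cosh k)\<^sup>2 - 1) = sinh k"
    using k_pos by (simp flip: sinh_square_eq)
  moreover have "k / cosh k * cosh k = k" and "k / cosh k * sinh k = k * tanh k"
    by (simp_all add: tanh_def)
  moreover have "D\<^sup>2 * l\<^sup>2 * \<beta> / 16 * exp (- (2 * k)) \<le> D\<^sup>2 * l\<^sup>2 * \<beta> / 16 * (1 - (tanh k)\<^sup>2)"
    using exp_minus_double_le_one_minus_tanh_square[of k] k_pos assms
    by (intro mult_left_mono) auto
  moreover have "exp (4 * k) / (4 * k) \<le> 1 / (2 * k) * exp (4 * k)"
    using k_pos by (simp add: frac_le)
  ultimately show ?thesis
    using overdamped_response_le[OF k_pos]
    unfolding Let_def k_multiples k_def[symmetric] damping by simp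
qed

theorem lemma14:
  fixes D l \<beta> :: real
  assumes "D > 0" and "l > 0" and "\<beta> > 0"
  shows
   "(D^2 * l * \<beta> < 8 \<longrightarrow>
      (let a = 4 / (D^2 * \<beta>); w = omegaN \<beta> a; x = xi D l \<beta> a;
           c = exp (D * w * x) /
               (cos (D * w * sqrt (1 - x^2)) - x / sqrt (1 - x^2) * sin (D * w * sqrt (1 - x^2)))
       in a \<ge> l / 2 \<and> c \<le> 2 * exp 1 / (1 - D^2 * l * \<beta> / 8)^2))
  \<and> (let a = D^2 * l^2 * \<beta> / 16 * (1 - (tanh (D^2 * l * \<beta> / 8))^2);
           w = omegaN \<beta> a; x = xi D l \<beta> a;
           c = exp (D * w * x) /
               (cosh (D * w * sqrt (x^2 - 1)) - x / sqrt (x^2 - 1) * sinh (D * w * sqrt (x^2 - 1)))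
       in a \<ge> D^2 * l^2 * \<beta> / 16 * exp (- (D^2 * l * \<beta> / 4)) \<and>
          c \<le> 4 / (D^2 * l * \<beta>) * exp (D^2 * l * \<beta> / 2))"
  using underdamped_choice_bounds[OF assms] overdamped_choice_bounds[OF assms] by blast

end
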